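(* Let $K$ be a Markov kernel on a finite set $\mathcal{X}$, reversible with respect to a probability measure $\pi$, and assume that for all $f:\mathcal{X}\to\mathbb{R}$ \[ \mathrm{Ent}_\pi(f^2)\le2\sigma^2\int\sum_{y\in\mathcal{X}}(f(x)-f(y))^2K(x,y)\,d\pi(x). \] Then for every $f:\mathcal{X}\to\mathbb{R}$ and every $p\ge2$, \[ \mathrm{Ent}_\pi(|f|^p)\le\sigma^2p^2\int|f|^{p-2}|\partial f|^2d\pi, \qquad \mathrm{Ent}_\pi(|f|^p)\le\sigma^2p^2\|f\|_p^{p-2}\|\partial f\|_p^2, \] where $|\partial f|(x)=\big(\sum_{y\in\mathcal{X}}(f(x)-f(y))^2K(x,y)\big)^{1/2}$.
   Context: $\mathrm{Ent}_\pi(g)=\mathbb{E}_\pi g\log g-\mathbb{E}_\pi g\log\mathbb{E}_\pi g$ for $g\ge0$; $\|g\|_p=(\mathbb{E}_\pi|g|^p)^{1/p}$ and $\|\partial f\|_p=\||\partial f|\|_p$. *)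

theory Defs
  imports "HOL-Analysis.Analysis"
begin

text \<open>Power of a nonnegative real with the convention t^0 = 1 (also for t = 0),
  which Isabelle's powr does not follow (0 powr 0 = 0).\<close>
definition rpow :: "real \<Rightarrow> real \<Rightarrow> real" where
  "rpow t a = (if a = 0 then 1 else t powr a)"

definition expect :: "('a::finite \<Rightarrow> real) \<Rightarrow> ('a \<Rightarrow> real) \<Rightarrow> real" where
  "expect \<pi> g = (\<Sum>x\<in>UNIV. \<pi> x * g x)"

definition Ent :: "('a::finite \<Rightarrow> real) \<Rightarrow> ('a \<Rightarrow> real) \<Rightarrow> real" where
  "Ent \<pi> g = expect \<pi> (\<lambda>x. g x * ln (g x)) - expect \<pi> g * ln (expect \<pi> g)"

definition Lpnorm :: "('a::finite \<Rightarrow> real) \<Rightarrow> real \<Rightarrow> ('a \<Rightarrow> real) \<Rightarrow> real" where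
  "Lpnorm \<pi> p g = (expect \<pi> (\<lambda>x. \<bar>g x\<bar> powr p)) powr (1 / p)"

definition grad :: "('a::finite \<Rightarrow> 'a \<Rightarrow> real) \<Rightarrow> ('a \<Rightarrow> real) \<Rightarrow> 'a \<Rightarrow> real" where
  "grad K f x = sqrt (\<Sum>y\<in>UNIV. (f x - f y)^2 * K x y)"

definition markov_kernel :: "('a::finite \<Rightarrow> 'a \<Rightarrow> real) \<Rightarrow> bool" where
  "markov_kernel K \<longleftrightarrow> (\<forall>x y. K x y \<ge> 0) \<and> (\<forall>x. (\<Sum>y\<in>UNIV. K x y) = 1)"

definition prob_vector :: "('a::finite \<Rightarrow> real) \<Rightarrow> bool" where
  "prob_vector \<pi> \<longleftrightarrow> (\<forall>x. \<pi> x \<ge> 0) \<and> (\<Sum>x\<in>UNIV. \<pi> x) = 1"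

definition reversible :: "('a::finite \<Rightarrow> 'a \<Rightarrow> real) \<Rightarrow> ('a \<Rightarrow> real) \<Rightarrow> bool" where
  "reversible K \<pi> \<longleftrightarrow> (\<forall>x y. \<pi> x * K x y = \<pi> y * K y x)"

end

theory Submission
  imports Defs
begin

text \<open>Apply the log-Sobolev inequality to \<open>|f|^(p/2)\<close>. The mean value bound
  \<open>(a^q - b^q)^2 \<le> q^2 (a^(2q-2) + b^(2q-2)) (a - b)^2\<close> with \<open>q = p/2\<close>, combined with
  reversibility (which makes the Dirichlet form symmetric in \<open>x\<close> and \<open>y\<close>), bounds the
  resulting Dirichlet form by \<open>(p^2/2) \<integral> |f|^(p-2) |\<partial>f|^2 d\<pi>\<close>. Hoelder's inequality with
  exponents \<open>p/(p-2)\<close> and \<open>p/2\<close> then gives the second, normed form.\<close>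

lemma rpow_nonneg: "rpow t a \<ge> 0"
  by (simp add: rpow_def)

lemma powr_diff_le_tangent:
  fixes a b q :: real
  assumes "0 \<le> b" "b \<le> a" "q \<ge> 1"
  shows "a powr q - b powr q \<le> q * rpow a (q - 1) * (a - b)"
proof (cases "b = 0")
  case True
  then show ?thesis
    using assms by (cases "a = 0") (auto simp: rpow_def powr_diff mult_le_cancel_right1)
next
  case False
  with assms have a: "a > 0" and b: "b > 0" by auto
  have "b powr q - a powr q \<ge> q * a powr (q - 1) * (b - a)"
    by (rule convex_on_imp_above_tangent[OF powr_convex[OF assms(3)]])
      (use a b in \<open>auto intro!: has_field_derivative_at_within has_real_derivative_powr
                      simp: interior_open\<close>)
  then show ?thesis
    using a b by (cases "q = 1") (auto simp: rpow_def algebra_simps)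
qed

lemma powr_diff_square_le:
  fixes a b q :: real
  assumes "0 \<le> a" "0 \<le> b" "q \<ge> 1"
  shows "(a powr q - b powr q)^2 \<le> q^2 * (rpow a (2*q - 2) + rpow b (2*q - 2)) * (a - b)^2"
proof -
  have ordered: "(a powr q - b powr q)^2 \<le> q^2 * rpow a (2*q - 2) * (a - b)^2"
    if "0 \<le> b" "b \<le> a" for a b
  proof -
    have "0 \<le> a powr q - b powr q"
      using that assms(3) by (simp add: powr_mono2)
    then have "(a powr q - b powr q)^2 \<le> (q * rpow a (q - 1) * (a - b))^2"
      using powr_diff_le_tangent[OF that assms(3)] by (simp add: power_mono)
    also have "\<dots> = q^2 * rpow a (2*q - 2) * (a - b)^2"
      using that by (auto simp: rpow_def power_mult_distrib power2_eq_square powr_add[symmetric])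
    finally show ?thesis .
  qed
  show ?thesis
  proof (cases "b \<le> a")
    case True
    then show ?thesis
      using ordered[OF assms(2) True] rpow_nonneg[of b "2*q - 2"]
      by (smt (verit) mult_left_mono mult_right_mono zero_le_power2)
  next
    case False
    then show ?thesis
      using ordered[OF assms(1), of b] rpow_nonneg[of a "2*q - 2"]
      by (smt (verit) mult_left_mono mult_right_mono zero_le_power2 power2_commute)
  qed
qed

lemma expect_Holder:
  fixes \<pi> u v :: "'a::finite \<Rightarrow> real" and \<alpha> \<beta> :: real
  assumes \<pi>: "\<And>x. \<pi> x \<ge> 0" and u: "\<And>x. u x \<ge> 0" and v: "\<And>x. v x \<ge> 0"
    and \<alpha>\<beta>: "0 < \<alpha>" "0 < \<beta>" "\<alpha> + \<beta> = 1"
  shows "expect \<pi> (\<lambda>x. u x powr \<alpha> * v x powr \<beta>)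
         \<le> expect \<pi> u powr \<alpha> * expect \<pi> v powr \<beta>"
proof -
  define A where "A = expect \<pi> u"
  define B where "B = expect \<pi> v"
  have "A \<ge> 0" "B \<ge> 0"
    unfolding A_def B_def expect_def using \<pi> u v by (simp_all add: sum_nonneg)
  show ?thesis
  proof (cases "A = 0 \<or> B = 0")
    case True
    have "\<pi> x * u x = 0 \<or> \<pi> x * v x = 0" for x
      using True \<pi> u v unfolding A_def B_def expect_def
      by (subst (asm) (1 2) sum_nonneg_eq_0_iff) auto
    then have "expect \<pi> (\<lambda>x. u x powr \<alpha> * v x powr \<beta>) = 0"
      unfolding expect_def by (intro sum.neutral) auto
    then show ?thesis
      by simp
  next
    case False
    with \<open>A \<ge> 0\<close> \<open>B \<ge> 0\<close> have A: "A > 0" and B: "B > 0" by auto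
    \<comment> \<open>Young's inequality applied to \<open>u x / A\<close> and \<open>v x / B\<close>\<close>
    have pointwise: "u x powr \<alpha> * v x powr \<beta>
        \<le> A powr \<alpha> * B powr \<beta> * (\<alpha> * u x / A + \<beta> * v x / B)" for x
    proof (cases "u x = 0 \<or> v x = 0")
      case True
      then show ?thesis
        using u[of x] v[of x] A B \<alpha>\<beta> by (auto intro!: add_nonneg_nonneg divide_nonneg_pos)
    next
      case False
      with u[of x] v[of x] have "u x > 0" "v x > 0" by auto
      then have "(u x powr \<alpha> * v x powr \<beta>) / (A powr \<alpha> * B powr \<beta>) \<le> \<alpha> * (u x / A) + \<beta> * (v x / B)"
        using Youngs_inequality_0[of \<alpha> \<beta> "u x / A" "v x / B"] \<alpha>\<beta> A B by (simp add: powr_divide)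
      then show ?thesis
        using A B by (simp add: divide_le_eq mult.commute)
    qed
    have "expect \<pi> (\<lambda>x. u x powr \<alpha> * v x powr \<beta>)
        \<le> expect \<pi> (\<lambda>x. A powr \<alpha> * B powr \<beta> * (\<alpha> * u x / A + \<beta> * v x / B))"
      unfolding expect_def by (intro sum_mono mult_left_mono pointwise \<pi>)
    also have "\<dots> = A powr \<alpha> * B powr \<beta> * (\<alpha> * expect \<pi> u / A + \<beta> * expect \<pi> v / B)"
      unfolding expect_def
      by (simp add: sum.distrib sum_distrib_left sum_divide_distrib algebra_simps)
    also have "\<dots> = A powr \<alpha> * B powr \<beta>"
      using A B \<alpha>\<beta> by (simp add: A_def[symmetric] B_def[symmetric])
    finally show ?thesis
      by (simp add: A_def B_def)
  qed
qed

lemma expect_rpow_mult_square_le_Lpnorm: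
  fixes \<pi> f g :: "'a::finite \<Rightarrow> real" and p :: real
  assumes \<pi>: "\<And>x. \<pi> x \<ge> 0" and "p \<ge> 2"
  shows "expect \<pi> (\<lambda>x. rpow \<bar>f x\<bar> (p - 2) * (g x)^2)
         \<le> rpow (Lpnorm \<pi> p f) (p - 2) * (Lpnorm \<pi> p g)^2"
proof (cases "p = 2")
  case True
  have "expect \<pi> (\<lambda>x. \<bar>g x\<bar> powr 2) \<ge> 0"
    unfolding expect_def using \<pi> by (intro sum_nonneg) auto
  then show ?thesis
    by (simp add: True rpow_def Lpnorm_def powr_half_sqrt expect_def)
next
  case False
  with assms(2) have p: "p > 2" by simp
  have "expect \<pi> (\<lambda>x. (\<bar>f x\<bar> powr p) powr ((p - 2)/p) * (\<bar>g x\<bar> powr p) powr (2/p))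
        \<le> expect \<pi> (\<lambda>x. \<bar>f x\<bar> powr p) powr ((p - 2)/p) * expect \<pi> (\<lambda>x. \<bar>g x\<bar> powr p) powr (2/p)"
    using p by (intro expect_Holder \<pi>) (auto simp: field_simps)
  moreover have "(\<bar>f x\<bar> powr p) powr ((p - 2)/p) = rpow \<bar>f x\<bar> (p - 2)"
    and "(\<bar>g x\<bar> powr p) powr (2/p) = (g x)^2" for x
    using p by (simp_all add: powr_powr rpow_def)
  moreover have "expect \<pi> (\<lambda>x. \<bar>f x\<bar> powr p) powr ((p - 2)/p) = rpow (Lpnorm \<pi> p f) (p - 2)"
    and "expect \<pi> (\<lambda>x. \<bar>g x\<bar> powr p) powr (2/p) = (Lpnorm \<pi> p g)^2"
    using p by (simp_all add: Lpnorm_def rpow_def powr_powr power2_eq_square powr_add[symmetric])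
  ultimately show ?thesis
    by simp
qed

lemma grad_square:
  assumes "markov_kernel K"
  shows "(grad K f x)^2 = (\<Sum>y\<in>UNIV. (f x - f y)^2 * K x y)"
  using assms unfolding grad_def markov_kernel_def by (intro real_sqrt_pow2 sum_nonneg) auto

lemma reversible_dirichlet_symmetrize:
  assumes "reversible K \<pi>"
  shows "expect \<pi> (\<lambda>x. \<Sum>y\<in>UNIV. (r x + r y) * (f x - f y)^2 * K x y)
         = 2 * expect \<pi> (\<lambda>x. r x * (\<Sum>y\<in>UNIV. (f x - f y)^2 * K x y))"
proof -
  define d where "d x y = \<pi> x * K x y * (f x - f y)^2" for x y
  have "d y x = d x y" for x y
    using assms unfolding d_def reversible_def by (simp add: power2_commute)
  then have "(\<Sum>x\<in>UNIV. \<Sum>y\<in>UNIV. r y * d x y) = (\<Sum>x\<in>UNIV. \<Sum>y\<in>UNIV. r x * d x y)"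
    by (subst sum.swap) simp
  then show ?thesis
    by (simp add: expect_def d_def sum_distrib_left sum.distrib algebra_simps)
qed

lemma dirichlet_powr_half_le:
  fixes K :: "'a::finite \<Rightarrow> 'a \<Rightarrow> real" and \<pi> f :: "'a \<Rightarrow> real" and p :: real
  assumes K: "markov_kernel K" and \<pi>: "prob_vector \<pi>" and rev: "reversible K \<pi>" and "p \<ge> 2"
  shows "2 * expect \<pi> (\<lambda>x. \<Sum>y\<in>UNIV. (\<bar>f x\<bar> powr (p/2) - \<bar>f y\<bar> powr (p/2))^2 * K x y)
         \<le> p^2 * expect \<pi> (\<lambda>x. rpow \<bar>f x\<bar> (p - 2) * (grad K f x)^2)"
proof -
  define r where "r x = (p/2)^2 * rpow \<bar>f x\<bar> (p - 2)" for x
  have pointwise: "(\<bar>f x\<bar> powr (p/2) - \<bar>f y\<bar> powr (p/2))^2 \<le> (r x + r y) * (f x - f y)^2" for x y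
  proof -
    have "(\<bar>f x\<bar> powr (p/2) - \<bar>f y\<bar> powr (p/2))^2 \<le> (r x + r y) * (\<bar>f x\<bar> - \<bar>f y\<bar>)^2"
      using powr_diff_square_le[of "\<bar>f x\<bar>" "\<bar>f y\<bar>" "p/2"] \<open>p \<ge> 2\<close>
      by (simp add: r_def algebra_simps)
    also have "\<dots> \<le> (r x + r y) * (f x - f y)^2"
      using abs_triangle_ineq3[of "f x" "f y"] rpow_nonneg
      by (intro mult_left_mono) (auto simp: r_def abs_le_square_iff)
    finally show ?thesis .
  qed
  have "expect \<pi> (\<lambda>x. \<Sum>y\<in>UNIV. (\<bar>f x\<bar> powr (p/2) - \<bar>f y\<bar> powr (p/2))^2 * K x y)
        \<le> expect \<pi> (\<lambda>x. \<Sum>y\<in>UNIV. (r x + r y) * (f x - f y)^2 * K x y)"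
    using K \<pi> unfolding expect_def markov_kernel_def prob_vector_def
    by (intro sum_mono mult_left_mono mult_right_mono pointwise) auto
  also have "\<dots> = 2 * expect \<pi> (\<lambda>x. r x * (grad K f x)^2)"
    by (simp add: reversible_dirichlet_symmetrize[OF rev] grad_square[OF K])
  also have "\<dots> = (p^2 / 2) * expect \<pi> (\<lambda>x. rpow \<bar>f x\<bar> (p - 2) * (grad K f x)^2)"
    by (simp add: r_def expect_def sum_distrib_left power_divide algebra_simps)
  finally show ?thesis
    by simp
qed

theorem lemma3p2:
  fixes K :: "'a::finite \<Rightarrow> 'a \<Rightarrow> real" and \<pi> :: "'a \<Rightarrow> real" and \<sigma> :: real
  assumes "markov_kernel K" and "prob_vector \<pi>" and "reversible K \<pi>"
    and LSI: "\<And>f :: 'a \<Rightarrow> real. Ent \<pi> (\<lambda>x. (f x)^2)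
               \<le> 2 * \<sigma>^2 * expect \<pi> (\<lambda>x. \<Sum>y\<in>UNIV. (f x - f y)^2 * K x y)"
  shows "\<forall>(f :: 'a \<Rightarrow> real) (p :: real). p \<ge> 2 \<longrightarrow>
           Ent \<pi> (\<lambda>x. \<bar>f x\<bar> powr p)
             \<le> \<sigma>^2 * p^2 * expect \<pi> (\<lambda>x. rpow \<bar>f x\<bar> (p - 2) * (grad K f x)^2)
         \<and> Ent \<pi> (\<lambda>x. \<bar>f x\<bar> powr p)
             \<le> \<sigma>^2 * p^2 * rpow (Lpnorm \<pi> p f) (p - 2) * (Lpnorm \<pi> p (grad K f))^2"
proof (intro allI impI)
  fix f :: "'a \<Rightarrow> real" and p :: real
  assume "p \<ge> 2"
  define E where "E = expect \<pi> (\<lambda>x. rpow \<bar>f x\<bar> (p - 2) * (grad K f x)^2)"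
  have "(\<bar>f x\<bar> powr (p/2))^2 = \<bar>f x\<bar> powr p" for x
    by (simp add: power2_eq_square powr_add[symmetric])
  then have "Ent \<pi> (\<lambda>x. \<bar>f x\<bar> powr p)
      \<le> \<sigma>^2 * (2 * expect \<pi> (\<lambda>x. \<Sum>y\<in>UNIV. (\<bar>f x\<bar> powr (p/2) - \<bar>f y\<bar> powr (p/2))^2 * K x y))"
    using LSI[of "\<lambda>x. \<bar>f x\<bar> powr (p/2)"] by simp
  also have "\<dots> \<le> \<sigma>^2 * p^2 * E"
    using dirichlet_powr_half_le[OF assms(1-3) \<open>p \<ge> 2\<close>, of f]
    by (simp add: E_def mult.assoc mult_left_mono)
  finally have Ent_le_E: "Ent \<pi> (\<lambda>x. \<bar>f x\<bar> powr p) \<le> \<sigma>^2 * p^2 * E" .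
  have "E \<le> rpow (Lpnorm \<pi> p f) (p - 2) * (Lpnorm \<pi> p (grad K f))^2"
    unfolding E_def using assms(2) \<open>p \<ge> 2\<close>
    by (intro expect_rpow_mult_square_le_Lpnorm) (auto simp: prob_vector_def)
  then have "\<sigma>^2 * p^2 * E \<le> \<sigma>^2 * p^2 * rpow (Lpnorm \<pi> p f) (p - 2) * (Lpnorm \<pi> p (grad K f))^2"
    by (simp add: mult.assoc mult_left_mono)
  with Ent_le_E show "Ent \<pi> (\<lambda>x. \<bar>f x\<bar> powr p) \<le> \<sigma>^2 * p^2 * E
      \<and> Ent \<pi> (\<lambda>x. \<bar>f x\<bar> powr p)
          \<le> \<sigma>^2 * p^2 * rpow (Lpnorm \<pi> p f) (p - 2) * (Lpnorm \<pi> p (grad K f))^2"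
    by linarith
qed

end
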